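(* Let $G$ be a connected cubic graph and let $\mathfrak{T}$ be a spanning tree of $G$ produced by the following algorithm. Fix an indexing $w_1,\dots,w_n$ of $V(G)$ and a root $u\in V(G)$. Let $S_0=\{u\}$ and, for $i\geq 1$, let $S_i$ be the set of vertices at distance exactly $i$ from $u$. Delete every edge of $G$ with both endpoints in the same set $S_i$. Whenever two vertices $w_k,w_s\in S_i$ have a common neighbor $x\in S_{i+1}$, where $w_k$ precedes $w_s$ in the order comparing first by degree and then by index, delete the edge $w_kx$ (so each $x\in S_{i+1}$ keeps exactly one edge to $S_i$). Let $n_3$ denote the number of vertices of degree $3$ in $\mathfrak{T}$. Then $Z(\mathfrak{T})\leq n_3+2$.
   Context: Zero forcing: color each vertex of a graph $H$ black or white; if a black vertex has exactly one white neighbor, that neighbor is recolored black. A set $Z\subseteq V(H)$ is a zero forcing set if starting with exactly $Z$ black and applying this rule repeatedly makes all vertices black; the zero forcing number $Z(H)$ is the minimum size of a zero forcing set. A cubic graph is a $3$-regular simple graph. *)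

theory Defs
  imports Main
begin

definition simple_graph :: "'a set \<Rightarrow> ('a \<Rightarrow> 'a \<Rightarrow> bool) \<Rightarrow> bool" where
  "simple_graph V E \<longleftrightarrow> finite V \<and> (\<forall>a b. E a b \<longrightarrow> E b a) \<and> (\<forall>a. \<not> E a a)
     \<and> (\<forall>a b. E a b \<longrightarrow> a \<in> V \<and> b \<in> V)"

definition degree :: "'a set \<Rightarrow> ('a \<Rightarrow> 'a \<Rightarrow> bool) \<Rightarrow> 'a \<Rightarrow> nat" where
  "degree V E v = card {w \<in> V. E v w}"

definition cubic :: "'a set \<Rightarrow> ('a \<Rightarrow> 'a \<Rightarrow> bool) \<Rightarrow> bool" where
  "cubic V E \<longleftrightarrow> simple_graph V E \<and> (\<forall>v\<in>V. degree V E v = 3)"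

fun walk :: "('a \<Rightarrow> 'a \<Rightarrow> bool) \<Rightarrow> nat \<Rightarrow> 'a \<Rightarrow> 'a \<Rightarrow> bool" where
  "walk E 0 a b = (a = b)"
| "walk E (Suc n) a b = (\<exists>c. E a c \<and> walk E n c b)"

definition connected_graph :: "'a set \<Rightarrow> ('a \<Rightarrow> 'a \<Rightarrow> bool) \<Rightarrow> bool" where
  "connected_graph V E \<longleftrightarrow> V \<noteq> {} \<and> (\<forall>a\<in>V. \<forall>b\<in>V. \<exists>n. walk E n a b)"

definition gdist :: "('a \<Rightarrow> 'a \<Rightarrow> bool) \<Rightarrow> 'a \<Rightarrow> 'a \<Rightarrow> nat" where
  "gdist E a b = (LEAST n. walk E n a b)"

text \<open>The algorithm. Step 1: delete every edge with both endpoints at the same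
distance from the root u (i.e. in the same layer S_i).\<close>
definition layer_pruned :: "('a \<Rightarrow> 'a \<Rightarrow> bool) \<Rightarrow> 'a \<Rightarrow> 'a \<Rightarrow> 'a \<Rightarrow> bool" where
  "layer_pruned E u a b \<longleftrightarrow> E a b \<and> gdist E u a \<noteq> gdist E u b"

text \<open>Order used to decide which edge is kept: compare first by degree (in the
graph obtained after Step 1), then by index.  a precedes b iff
(deg a, idx a) < (deg b, idx b) lexicographically.\<close>
definition precedes :: "'a set \<Rightarrow> ('a \<Rightarrow> 'a \<Rightarrow> bool) \<Rightarrow> 'a \<Rightarrow> ('a \<Rightarrow> nat) \<Rightarrow> 'a \<Rightarrow> 'a \<Rightarrow> bool" where
  "precedes V E u idx a b \<longleftrightarrow>
     (let d = degree V (layer_pruned E u) in d a < d b \<or> (d a = d b \<and> idx a < idx b))"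

text \<open>Step 2: a vertex x in S_(i+1) keeps only its edge to the neighbour p in S_i
that every other neighbour of x in S_i precedes (an edge w x is deleted whenever
w precedes another neighbour of x in S_i).\<close>
definition is_parent :: "'a set \<Rightarrow> ('a \<Rightarrow> 'a \<Rightarrow> bool) \<Rightarrow> 'a \<Rightarrow> ('a \<Rightarrow> nat) \<Rightarrow> 'a \<Rightarrow> 'a \<Rightarrow> bool" where
  "is_parent V E u idx p x \<longleftrightarrow>
     E p x \<and> gdist E u x = gdist E u p + 1 \<and>
     (\<forall>c. E c x \<and> gdist E u c = gdist E u p \<and> c \<noteq> p \<longrightarrow> precedes V E u idx c p)"

definition alg_tree :: "'a set \<Rightarrow> ('a \<Rightarrow> 'a \<Rightarrow> bool) \<Rightarrow> 'a \<Rightarrow> ('a \<Rightarrow> nat) \<Rightarrow> 'a \<Rightarrow> 'a \<Rightarrow> bool" where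
  "alg_tree V E u idx a b \<longleftrightarrow> is_parent V E u idx a b \<or> is_parent V E u idx b a"

text \<open>Zero forcing.  The set of vertices eventually black when starting from Z
and applying the colour-change rule repeatedly (a black vertex v whose only white
neighbour is w forces w).\<close>
inductive_set forced_closure :: "'a set \<Rightarrow> ('a \<Rightarrow> 'a \<Rightarrow> bool) \<Rightarrow> 'a set \<Rightarrow> 'a set"
  for V E Z where
  init: "z \<in> Z \<Longrightarrow> z \<in> forced_closure V E Z"
| force: "\<lbrakk> v \<in> forced_closure V E Z; v \<in> V; w \<in> V; E v w;
            \<forall>x\<in>V. E v x \<and> x \<noteq> w \<longrightarrow> x \<in> forced_closure V E Z \<rbrakk>
          \<Longrightarrow> w \<in> forced_closure V E Z"

definition zero_forcing_set :: "'a set \<Rightarrow> ('a \<Rightarrow> 'a \<Rightarrow> bool) \<Rightarrow> 'a set \<Rightarrow> bool" where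
  "zero_forcing_set V E Z \<longleftrightarrow> Z \<subseteq> V \<and> V \<subseteq> forced_closure V E Z"

definition zero_forcing_number :: "'a set \<Rightarrow> ('a \<Rightarrow> 'a \<Rightarrow> bool) \<Rightarrow> nat" where
  "zero_forcing_number V E = (LEAST k. \<exists>Z. zero_forcing_set V E Z \<and> card Z = k)"

end

theory Submission
  imports Defs "HOL-Library.Product_Lexorder"
begin

text \<open>Every vertex x other than the root u has a parent p one layer closer to u, and
the algorithm keeps exactly the edges between vertices and their parents. In this
tree, start with u black together with all children of every vertex except
one. Layer by layer, each black vertex p then has only one white neighbour, namely its
distinguished child: its parent lies in an earlier layer and its other children are
black already. So p forces that child and the whole tree turns black. As every degree
is at most 3, a non-root vertex has at most two children, and two only if it has
degree 3; the root has at most three children. Hence at most n3 + 1 children are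
initially black, which together with u gives n3 + 2.\<close>

lemma zero_forcing_number_le_card:
  "zero_forcing_set V E Z \<Longrightarrow> zero_forcing_number V E \<le> card Z"
  unfolding zero_forcing_number_def by (rule Least_le) blast

lemma degree_mono:
  assumes "finite V" and "\<And>a b. T a b \<Longrightarrow> E a b"
  shows "degree V T v \<le> degree V E v"
  unfolding degree_def using assms by (intro card_mono) auto

lemma walk_snoc: "walk E (Suc n) a b \<longleftrightarrow> (\<exists>c. walk E n a c \<and> E c b)"
  by (induction n arbitrary: a) auto

lemma walk_gdist: "walk E n u x \<Longrightarrow> walk E (gdist E u x) u x"
  unfolding gdist_def by (rule LeastI)

lemma gdist_le: "walk E n u x \<Longrightarrow> gdist E u x \<le> n"
  unfolding gdist_def by (rule Least_le)

lemma gdist_predecessor: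
  assumes "walk E n u x" and "x \<noteq> u"
  obtains q where "E q x" and "gdist E u x = Suc (gdist E u q)"
proof -
  have wx: "walk E (gdist E u x) u x" using walk_gdist[OF assms(1)] .
  then obtain k where k: "gdist E u x = Suc k"
    using assms(2) by (cases "gdist E u x") auto
  then obtain q where q: "walk E k u q" "E q x" using wx walk_snoc by metis
  have "walk E (Suc (gdist E u q)) u x" using walk_gdist[OF q(1)] q(2) walk_snoc by metis
  then have "k \<le> gdist E u q" using gdist_le k by fastforce
  moreover have "gdist E u q \<le> k" using gdist_le[OF q(1)] .
  ultimately show thesis using that q(2) k by simp
qed

lemma precedes_iff_key_less:
  "precedes V E u idx a b \<longleftrightarrow>
     (degree V (layer_pruned E u) a, idx a) < (degree V (layer_pruned E u) b, idx b)"
  unfolding precedes_def Let_def by auto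

text \<open>The parent of x is the neighbour in the previous layer that is greatest in the
order of the algorithm; it exists because idx separates vertices.\<close>

lemma exists_is_parent:
  assumes sg: "simple_graph V E" and inj: "inj_on idx V"
    and x: "x \<noteq> u" and w: "walk E n u x"
  shows "\<exists>p. is_parent V E u idx p x"
proof -
  obtain q where q: "E q x" and dq: "gdist E u x = Suc (gdist E u q)"
    using gdist_predecessor[OF w x] .
  define P where "P = {p. E p x \<and> gdist E u p = gdist E u q}"
  define key where "key = (\<lambda>a. (degree V (layer_pruned E u) a, idx a))"
  have PV: "P \<subseteq> V" using sg unfolding P_def simple_graph_def by blast
  have finP: "finite P" using PV sg finite_subset unfolding simple_graph_def by blast
  have "q \<in> P" using q unfolding P_def by blast
  then have "Max (key ` P) \<in> key ` P" using finP by (intro Max_in) auto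
  then obtain p where pmax: "Max (key ` P) = key p" and pP: "p \<in> P" by (rule imageE)
  have "precedes V E u idx c p" if c: "c \<in> P" "c \<noteq> p" for c
  proof -
    have "key c \<le> key p" using c(1) finP unfolding pmax[symmetric] by simp
    moreover have "key c \<noteq> key p" using c pP PV inj unfolding key_def inj_on_def by auto
    ultimately have "key c < key p" by simp
    then show ?thesis unfolding precedes_iff_key_less key_def .
  qed
  moreover have "E p x" and "gdist E u p = gdist E u q" using pP unfolding P_def by auto
  ultimately have "is_parent V E u idx p x"
    using dq unfolding is_parent_def P_def by auto
  then show ?thesis by blast
qed

text \<open>Only the ranks of parents matter below, not their uniqueness.\<close>

locale graded_parents =
  fixes V :: "'a set" and par :: "'a \<Rightarrow> 'a \<Rightarrow> bool" and u :: 'a and rank :: "'a \<Rightarrow> nat"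
  assumes root_in: "u \<in> V"
    and par_in: "par p x \<Longrightarrow> p \<in> V \<and> x \<in> V"
    and rank_less: "par p x \<Longrightarrow> rank p < rank x"
    and has_par: "x \<in> V \<Longrightarrow> x \<noteq> u \<Longrightarrow> \<exists>p. par p x"
begin

definition tree :: "'a \<Rightarrow> 'a \<Rightarrow> bool" where
  "tree a b \<longleftrightarrow> par a b \<or> par b a"

definition children :: "'a \<Rightarrow> 'a set" where
  "children p = {x \<in> V. par p x}"

definition parents :: "'a \<Rightarrow> 'a set" where
  "parents x = {p \<in> V. par p x}"

text \<open>c p is the child of p that is left white initially.\<close>

definition forcing_set :: "('a \<Rightarrow> 'a) \<Rightarrow> 'a set" where
  "forcing_set c = insert u (\<Union>p\<in>V. children p - {c p})"

lemma forcing_set_subset: "forcing_set c \<subseteq> V"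
  using root_in unfolding forcing_set_def children_def by auto

lemma forcing_set_closure: "x \<in> V \<Longrightarrow> x \<in> forced_closure V tree (forcing_set c)"
proof (induction "rank x" arbitrary: x rule: less_induct)
  case less
  show ?case
  proof (cases "x \<in> forcing_set c")
    case True
    then show ?thesis by (rule forced_closure.init)
  next
    case False
    then obtain p where p: "par p x"
      using has_par[OF less.prems] unfolding forcing_set_def by blast
    have pV: "p \<in> V" using par_in[OF p] by blast
    have x_chosen: "x = c p"
    proof (rule ccontr)
      assume "x \<noteq> c p"
      then have "x \<in> children p - {c p}" using p less.prems unfolding children_def by simp
      then show False using False pV unfolding forcing_set_def by blast
    qed
    have black: "y \<in> forced_closure V tree (forcing_set c)" if "y \<in> V" "tree p y" "y \<noteq> x" for y
    proof (cases "par p y")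
      case True
      then have "y \<in> children p - {c p}" using that x_chosen unfolding children_def by simp
      then have "y \<in> forcing_set c" using pV unfolding forcing_set_def by blast
      then show ?thesis by (rule forced_closure.init)
    next
      case False
      then have "par y p" using that(2) unfolding tree_def by simp
      then have "rank y < rank x" using rank_less p by (meson less_trans)
      then show ?thesis using less.hyps that(1) by blast
    qed
    show ?thesis
    proof (rule forced_closure.force[OF _ pV less.prems])
      show "p \<in> forced_closure V tree (forcing_set c)"
        using less.hyps[OF rank_less[OF p] pV] .
      show "tree p x" using p unfolding tree_def by simp
      show "\<forall>y\<in>V. tree p y \<and> y \<noteq> x \<longrightarrow> y \<in> forced_closure V tree (forcing_set c)"
        using black by blast
    qed
  qed
qed

lemma zero_forcing_set_forcing_set: "zero_forcing_set V tree (forcing_set c)"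
  unfolding zero_forcing_set_def using forcing_set_subset forcing_set_closure by blast

lemma degree_tree:
  assumes "finite V"
  shows "degree V tree p = card (children p) + card (parents p)"
proof -
  have "\<not> (par p w \<and> par w p)" for w
    using rank_less[of p w] rank_less[of w p] by linarith
  then have disj: "children p \<inter> parents p = {}"
    unfolding children_def parents_def by blast
  have "{w \<in> V. tree p w} = children p \<union> parents p"
    unfolding tree_def children_def parents_def by blast
  moreover have "finite (children p)" and "finite (parents p)"
    using assms unfolding children_def parents_def by simp_all
  ultimately show ?thesis
    unfolding degree_def using card_Un_disjoint disj by metis
qed

lemma card_children_minus_le:
  assumes "finite V" and "p \<in> V" and "degree V tree p \<le> 3"
    and "children p \<noteq> {} \<Longrightarrow> c p \<in> children p"
  shows "card (children p - {c p}) \<le> of_bool (degree V tree p = 3) + of_bool (p = u)"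
proof -
  have "p \<noteq> u \<Longrightarrow> parents p \<noteq> {}"
    using has_par[OF assms(2)] par_in unfolding parents_def by blast
  then have parent: "p \<noteq> u \<Longrightarrow> card (parents p) \<ge> 1"
    using assms(1) unfolding parents_def by (simp add: Suc_leI card_gt_0_iff)
  have "finite (children p)" using assms(1) unfolding children_def by simp
  then have child: "card (children p - {c p}) \<le> card (children p) - 1"
    using assms(4) by (cases "children p = {}") auto
  have count: "k \<le> of_bool (d = 3) + of_bool (p = u)"
    if "k \<le> a - 1" "d = a + b" "d \<le> 3" "p \<noteq> u \<Longrightarrow> 1 \<le> b" for k a b d :: nat
    using that by (cases "p = u"; cases "d = 3") auto
  show ?thesis
    using count[OF child degree_tree[OF assms(1)] assms(3) parent] .
qed

lemma card_forcing_set_le: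
  assumes fin: "finite V" and deg: "\<And>v. v \<in> V \<Longrightarrow> degree V tree v \<le> 3"
    and c: "\<And>p. children p \<noteq> {} \<Longrightarrow> c p \<in> children p"
  shows "card (forcing_set c) \<le> card {v \<in> V. degree V tree v = 3} + 2"
proof -
  have "card (forcing_set c) \<le> Suc (card (\<Union>p\<in>V. children p - {c p}))"
    unfolding forcing_set_def by (rule card_insert_le_m1) (use fin in \<open>auto simp: children_def\<close>)
  also have "\<dots> \<le> Suc (\<Sum>p\<in>V. card (children p - {c p}))"
    using card_UN_le[OF fin] by simp
  also have "\<dots> \<le> Suc (\<Sum>p\<in>V. of_bool (degree V tree p = 3) + of_bool (p = u))"
  proof -
    have "card (children p - {c p}) \<le> of_bool (degree V tree p = 3) + of_bool (p = u)"
      if "p \<in> V" for p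
      using card_children_minus_le[of p c, OF fin that deg[OF that] c] .
    then show ?thesis by (simp add: sum_mono)
  qed
  also have "\<dots> = card {v \<in> V. degree V tree v = 3} + 2"
  proof -
    have "(\<Sum>p\<in>V. of_bool (degree V tree p = 3)) = card {v \<in> V. degree V tree v = 3}"
      using fin by (simp add: Collect_conj_eq)
    moreover have "(\<Sum>p\<in>V. of_bool (p = u)) = (1::nat)"
      using fin root_in by simp
    ultimately show ?thesis by (simp add: sum.distrib)
  qed
  finally show ?thesis .
qed

theorem zero_forcing_number_le:
  assumes "finite V" and "\<And>v. v \<in> V \<Longrightarrow> degree V tree v \<le> 3"
  shows "zero_forcing_number V tree \<le> card {v \<in> V. degree V tree v = 3} + 2"
proof -
  define c where "c p = (SOME x. x \<in> children p)" for p
  have "zero_forcing_number V tree \<le> card (forcing_set c)"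
    by (rule zero_forcing_number_le_card[OF zero_forcing_set_forcing_set])
  also have "\<dots> \<le> card {v \<in> V. degree V tree v = 3} + 2"
    by (rule card_forcing_set_le[OF assms]) (use some_in_eq in \<open>auto simp: c_def\<close>)
  finally show ?thesis .
qed

end

theorem mainTheorem4:
  fixes V :: "'a set" and E :: "'a \<Rightarrow> 'a \<Rightarrow> bool" and u :: 'a and idx :: "'a \<Rightarrow> nat"
  assumes "cubic V E"
    and "connected_graph V E"
    and "bij_betw idx V {1..card V}"
    and "u \<in> V"
  shows "zero_forcing_number V (alg_tree V E u idx)
           \<le> card {v \<in> V. degree V (alg_tree V E u idx) v = 3} + 2"
proof -
  have sg: "simple_graph V E" and deg3: "\<And>v. v \<in> V \<Longrightarrow> degree V E v = 3"
    using assms(1) unfolding cubic_def by auto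
  have fin: "finite V" using sg unfolding simple_graph_def by blast
  have edge: "E p x \<and> E x p \<and> p \<in> V \<and> x \<in> V \<and> gdist E u p < gdist E u x"
    if "is_parent V E u idx p x" for p x
    using that sg unfolding is_parent_def simple_graph_def by auto
  interpret graded_parents V "is_parent V E u idx" u "gdist E u"
  proof
    show "\<exists>p. is_parent V E u idx p x" if "x \<in> V" "x \<noteq> u" for x
      using assms(2,4) that exists_is_parent[OF sg bij_betw_imp_inj_on[OF assms(3)]]
      unfolding connected_graph_def by blast
  qed (use assms(4) edge in auto)
  have alg: "alg_tree V E u idx = tree" by (auto simp: fun_eq_iff alg_tree_def tree_def)
  have "degree V tree v \<le> 3" if "v \<in> V" for v
    using degree_mono[OF fin, of tree E v] deg3[OF that] edge unfolding tree_def by auto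
  then show ?thesis unfolding alg using zero_forcing_number_le[OF fin] by blast
qed

end
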